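(* Let $a,b,c\in\mathbb{R}$ and $f(x)=x^3+ax^2+bx+c$. Then $f(x)\ge0$ for all $x\ge0$ if and only if one of the following holds: (1) $a\ge0$, $b\ge0$ and $c\ge0$; (2) $c=0$ and $a^2-4b\le0$; (3) $c>0$ and $a^2b^2-4b^3-4a^3c+18abc-27c^2\le0$. *)

theory Defs
  imports Complex_Main
begin

end

theory Submission
  imports Defs
begin

text \<open>
  Sufficiency: if \<open>c > 0\<close> and \<open>f\<close> were negative at some \<open>x\<^sub>0 \<ge> 0\<close>, it would have a root
  \<open>r \<in> [0, x\<^sub>0)\<close>. Writing \<open>f = (x - r) g\<close>, the discriminant of \<open>f\<close> is \<open>disc(g) f'(r)\<^sup>2\<close>, and
  \<open>g(x\<^sub>0) < 0\<close> forces \<open>disc(g) > 0\<close>; so a nonpositive discriminant makes \<open>r\<close> a double root,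
  \<open>f = (x - r)\<^sup>2 (x + a + 2r)\<close>, and \<open>c = r\<^sup>2 (a + 2r) > 0\<close> makes this nonnegative on
  \<open>[0, \<infinity>)\<close>. Necessity: the discriminant equals \<open>-27\<close> times the product of the two critical
  values of \<open>f\<close> (or is negative when there are no critical points); unless \<open>a, b \<ge> 0\<close> the
  local minimum lies in \<open>[0, \<infinity>)\<close>, and the local maximum is even larger.
\<close>

definition cubic :: "'a::comm_ring_1 \<Rightarrow> 'a \<Rightarrow> 'a \<Rightarrow> 'a \<Rightarrow> 'a" where
  "cubic a b c x = x^3 + a*x^2 + b*x + c"

definition cubic_discr :: "'a::comm_ring_1 \<Rightarrow> 'a \<Rightarrow> 'a \<Rightarrow> 'a" where
  "cubic_discr a b c = a^2*b^2 - 4*b^3 - 4*a^3*c + 18*a*b*c - 27*c^2"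

lemma cubic_discr_depressed:
  "27 * cubic_discr a b c = 4*(a^2 - 3*b)^3 - (2*a^3 - 9*a*b + 27*c)^2"
  unfolding cubic_discr_def by (simp add: algebra_simps power2_eq_square power3_eq_cube)

lemma cubic_discr_critical_values:
  fixes a b c s :: "'a::field_char_0"
  assumes "s^2 = a^2 - 3*b"
  shows "cubic_discr a b c = -27 * cubic a b c ((s - a)/3) * cubic a b c ((-s - a)/3)"
proof -
  have b: "b = (a^2 - s^2)/3" using assms by simp
  show ?thesis unfolding b cubic_discr_def cubic_def
    by (simp add: field_simps power2_eq_square power3_eq_cube)
qed

lemma cubic_critical_values_diff:
  fixes a b c s :: "'a::field_char_0"
  assumes "s^2 = a^2 - 3*b"
  shows "cubic a b c ((-s - a)/3) - cubic a b c ((s - a)/3) = 4*s^3/27"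
proof -
  have b: "b = (a^2 - s^2)/3" using assms by simp
  show ?thesis unfolding b cubic_def
    by (simp add: field_simps power2_eq_square power3_eq_cube)
qed

lemma cubic_root_factor:
  assumes "cubic a b c r = 0"
  shows "cubic a b c x = (x - r) * (x^2 + (a + r)*x + (b + r*(a + r)))"
proof -
  have c: "c = -(r^3 + a*r^2 + b*r)" using assms unfolding cubic_def by (simp only: add_eq_0_iff)
  show ?thesis unfolding cubic_def c by (simp add: algebra_simps power2_eq_square power3_eq_cube)
qed

lemma cubic_discr_root:
  assumes "cubic a b c r = 0"
  shows "cubic_discr a b c = ((a + r)^2 - 4*(b + r*(a + r))) * (3*r^2 + 2*a*r + b)^2"
proof -
  have c: "c = -(r^3 + a*r^2 + b*r)" using assms unfolding cubic_def by (simp only: add_eq_0_iff)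
  show ?thesis unfolding cubic_discr_def c
    by (simp add: algebra_simps power2_eq_square power3_eq_cube)
qed

lemma cubic_double_root_factor:
  assumes "cubic a b c r = 0" and "3*r^2 + 2*a*r + b = 0"
  shows "cubic a b c x = (x - r)^2 * (x + a + 2*r)"
proof -
  have b: "b = -(3*r^2 + 2*a*r)" using assms(2) by (simp only: add_eq_0_iff)
  have c: "c = -(r^3 + a*r^2 + b*r)" using assms(1) unfolding cubic_def by (simp only: add_eq_0_iff)
  show ?thesis unfolding cubic_def c b by (simp add: algebra_simps power2_eq_square power3_eq_cube)
qed

lemma quadratic_nonneg_if_discr_nonpos:
  fixes p q x :: "'a::linordered_field"
  assumes "p^2 - 4*q \<le> 0"
  shows "0 \<le> x^2 + p*x + q"
proof -
  have "4*(x^2 + p*x + q) = (2*x + p)^2 - (p^2 - 4*q)"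
    by (simp add: algebra_simps power2_eq_square)
  also have "\<dots> \<ge> 0" using assms zero_le_power2[of "2*x + p"] by linarith
  finally show ?thesis by simp
qed

lemma quadratic_nonneg_on_pos_imp_const_nonneg:
  fixes p q :: real
  assumes "\<forall>x>0. 0 \<le> x^2 + p*x + q"
  shows "0 \<le> q"
proof (rule tendsto_lowerbound)
  show "((\<lambda>x. x^2 + p*x + q) \<longlongrightarrow> q) (at_right 0)"
    by (rule tendsto_eq_intros | simp)+
  show "\<forall>\<^sub>F x in at_right 0. 0 \<le> x^2 + p*x + q"
    using eventually_at_right_less[of "0::real"] by eventually_elim (use assms in auto)
qed simp

lemma cubic_nonneg_if_discr_nonpos:
  fixes a b c x :: real
  assumes c: "c > 0" and discr: "cubic_discr a b c \<le> 0" and x: "x \<ge> 0"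
  shows "cubic a b c x \<ge> 0"
proof (rule ccontr)
  assume "\<not> ?thesis"
  then have fx: "cubic a b c x < 0" by simp
  have "continuous_on {0..x} (cubic a b c)" unfolding cubic_def by (intro continuous_intros)
  moreover have "cubic a b c 0 = c" by (simp add: cubic_def)
  ultimately obtain r where r: "0 \<le> r" "r \<le> x" "cubic a b c r = 0"
    using IVT2'[of "cubic a b c" x 0 0] fx c x by auto
  have "r < x" using r fx by (cases "r = x") auto
  let ?p = "a + r" and ?q = "b + r*(a + r)"
  have "x^2 + ?p*x + ?q < 0"
    using fx \<open>r < x\<close> cubic_root_factor[OF r(3), of x] by (simp add: mult_less_0_iff)
  then have "?p^2 - 4*?q > 0" using quadratic_nonneg_if_discr_nonpos[of ?p ?q x] by linarith
  then have "(3*r^2 + 2*a*r + b)^2 \<le> 0"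
    using discr cubic_discr_root[OF r(3)] by (simp add: mult_le_0_iff)
  then have "3*r^2 + 2*a*r + b = 0" by simp
  note double = cubic_double_root_factor[OF r(3) this]
  have "r^2 * (a + 2*r) > 0" using double[of 0] c by (simp add: cubic_def)
  then have "a + 2*r > 0" by (simp add: zero_less_mult_iff)
  then have "cubic a b c x \<ge> 0" unfolding double[of x] using x by (intro mult_nonneg_nonneg) simp_all
  with fx show False by simp
qed

lemma cubic_discr_nonpos_if_nonneg:
  fixes a b c :: real
  assumes nonneg: "\<forall>x\<ge>0. cubic a b c x \<ge> 0" and ab: "a < 0 \<or> b < 0"
  shows "cubic_discr a b c \<le> 0"
proof (cases "a^2 - 3*b < 0")
  case True
  then have "4*(a^2 - 3*b)^3 < 0" by (simp add: power_less_zero_eq)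
  then show ?thesis using cubic_discr_depressed[of a b c]
    using zero_le_power2[of "2*a^3 - 9*a*b + 27*c"] by linarith
next
  case False
  define s where "s = sqrt (a^2 - 3*b)"
  have s0: "s \<ge> 0" and s2: "s^2 = a^2 - 3*b" using False by (simp_all add: s_def)
  have "a < s"
  proof (cases "a < 0")
    case False
    then have "a^2 < s^2" using ab s2 by simp
    then show ?thesis using s0 by (meson power_less_imp_less_base)
  qed (use s0 in simp)
  then have min: "cubic a b c ((s - a)/3) \<ge> 0" using nonneg by simp
  moreover have "cubic a b c ((-s - a)/3) \<ge> 0"
    using min cubic_critical_values_diff[OF s2, of c] zero_le_power[OF s0, of 3] by linarith
  ultimately show ?thesis using cubic_discr_critical_values[OF s2, of c]
    by (simp add: mult_nonneg_nonneg)
qed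

lemma cubic_nonneg_zero_const_cases:
  fixes a b :: real
  assumes nonneg: "\<forall>x\<ge>0. cubic a b 0 x \<ge> 0"
  shows "(a \<ge> 0 \<and> b \<ge> 0) \<or> a^2 - 4*b \<le> 0"
proof -
  have quadratic: "0 \<le> x^2 + a*x + b" if "x > 0" for x
  proof -
    have "cubic a b 0 x = x * (x^2 + a*x + b)"
      by (simp add: cubic_def algebra_simps power2_eq_square power3_eq_cube)
    moreover have "0 \<le> cubic a b 0 x" using nonneg that by simp
    ultimately have "0 \<le> x * (x^2 + a*x + b)" by simp
    then show ?thesis using that by (simp add: zero_le_mult_iff)
  qed
  have "b \<ge> 0" using quadratic quadratic_nonneg_on_pos_imp_const_nonneg by blast
  moreover have "a^2 - 4*b \<le> 0" if "a < 0"
    using quadratic[of "-a/2"] that by (simp add: power2_eq_square field_simps)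
  ultimately show ?thesis by linarith
qed

theorem lemma4p9:
  fixes a b c :: real
  shows "(\<forall>x::real. x \<ge> 0 \<longrightarrow> x^3 + a*x^2 + b*x + c \<ge> 0) \<longleftrightarrow>
    ((a \<ge> 0 \<and> b \<ge> 0 \<and> c \<ge> 0) \<or>
     (c = 0 \<and> a^2 - 4*b \<le> 0) \<or>
     (c > 0 \<and> a^2*b^2 - 4*b^3 - 4*a^3*c + 18*a*b*c - 27*c^2 \<le> 0))"
  unfolding cubic_def[symmetric] cubic_discr_def[symmetric]
proof
  assume nonneg: "\<forall>x\<ge>0. cubic a b c x \<ge> 0"
  have "c \<ge> 0" using nonneg[rule_format, of 0] by (simp add: cubic_def)
  then consider "a \<ge> 0" "b \<ge> 0" | "c = 0" | "c > 0" "a < 0 \<or> b < 0" by linarith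
  then show "(a \<ge> 0 \<and> b \<ge> 0 \<and> c \<ge> 0) \<or> (c = 0 \<and> a^2 - 4*b \<le> 0) \<or>
             (c > 0 \<and> cubic_discr a b c \<le> 0)"
  proof cases
    case 2
    then show ?thesis using cubic_nonneg_zero_const_cases[of a b] nonneg by auto
  next
    case 3
    then show ?thesis using cubic_discr_nonpos_if_nonneg[OF nonneg] by blast
  qed (use \<open>c \<ge> 0\<close> in blast)
next
  assume "(a \<ge> 0 \<and> b \<ge> 0 \<and> c \<ge> 0) \<or> (c = 0 \<and> a^2 - 4*b \<le> 0) \<or>
          (c > 0 \<and> cubic_discr a b c \<le> 0)"
  then show "\<forall>x\<ge>0. cubic a b c x \<ge> 0"
  proof (elim disjE conjE; intro allI impI)
    fix x :: real
    assume "c = 0" "a^2 - 4*b \<le> 0" "x \<ge> 0"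
    moreover have "cubic a b 0 x = x * (x^2 + a*x + b)"
      by (simp add: cubic_def algebra_simps power2_eq_square power3_eq_cube)
    ultimately show "cubic a b c x \<ge> 0"
      using quadratic_nonneg_if_discr_nonpos[of a b x] by simp
  next
    fix x :: real
    assume "c > 0" "cubic_discr a b c \<le> 0" "x \<ge> 0"
    then show "cubic a b c x \<ge> 0" by (rule cubic_nonneg_if_discr_nonpos)
  qed (simp add: cubic_def)
qed

end
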